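(* Let $i,j\geq 0$ and $R=(\gamma_{\mathrm{low}},\gamma_{\mathrm{mid}},\gamma_{\mathrm{up}})\in\mathcal{R}_{i,j}$, and let $\tau(R):=(\mathrm{mir}(\gamma_{\mathrm{up}}),\mathrm{mir}(\gamma_{\mathrm{mid}}),\mathrm{mir}(\gamma_{\mathrm{low}}))$, where $\mathrm{mir}(c_1\cdots c_n):=c_n\cdots c_1$ is the mirror word. Then $\tau(R)\in\mathcal{G}_{i,j}$ if and only if $R\in\mathcal{G}_{i,j}$.
   Context: A walk is a finite word on $\{N,E\}$, viewed as a lattice path from $(0,0)$ with steps $N=(0,1)$, $E=(1,0)$. For walks $\gamma,\gamma'$, $\gamma'$ is above $\gamma$ if they have the same endpoint and no East step of $\gamma$ lies strictly above the East step of $\gamma'$ in the same vertical column. For $\nu$ ending at $(i,j)$, $\mathcal{W}_\nu$ is the set of walks above $\nu$. For $\gamma\in\mathcal{W}_\nu$ and a point $p=(x,y)$ on $\gamma$, let $x'$ be the abscissa of the North step of $\nu$ from ordinate $y$ to $y+1$ ($x'=i$ if $y=j$) and $\ell(p)=x'-x$. If $p$ is preceded by $E$ and followed by $N$ in $\gamma$, let $p'$ be the next point after $p$ on $\gamma$ with $\ell(p')=\ell(p)$, and let $\mathrm{push}_p(\gamma)$ be obtained by moving the $E$ step preceding $p$ to just after $p'$. $\mathrm{Tam}(\nu)$ is the order on $\mathcal{W}_\nu$ given by the reflexive-transitive closure of $\gamma\leq\mathrm{push}_p(\gamma)$. $\mathcal{G}_{i,j}$ is the set of triples $(\nu,\gamma,\gamma')$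 with $\nu$ ending at $(i,j)$, $\gamma,\gamma'\in\mathcal{W}_\nu$ and $\gamma\leq\gamma'$ in $\mathrm{Tam}(\nu)$. $\mathcal{R}_{i,j}$ is the set of triples $(\nu,\gamma,\gamma')$ of walks all ending at $(i,j)$ with $\gamma'$ above $\gamma$ and $\gamma$ above $\nu$. *)

theory Defs
  imports Main
begin

datatype step = N | E

type_synonym walk = "step list"

definition ecount :: "walk \<Rightarrow> nat" where "ecount w = length (filter (\<lambda>s. s = E) w)"
definition ncount :: "walk \<Rightarrow> nat" where "ncount w = length (filter (\<lambda>s. s = N) w)"
definition endpoint :: "walk \<Rightarrow> nat \<times> nat" where "endpoint w = (ecount w, ncount w)"

text \<open>ordinate of the East step of w in column x (from abscissa x to x+1),
  i.e. the number of N steps before the (x+1)-th E step.\<close>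
fun eheight :: "walk \<Rightarrow> nat \<Rightarrow> nat" where
  "eheight [] k = 0"
| "eheight (N # w) k = Suc (eheight w k)"
| "eheight (E # w) 0 = 0"
| "eheight (E # w) (Suc k) = eheight w k"

text \<open>abscissa of the North step of w from ordinate y to y+1,
  i.e. the number of E steps before the (y+1)-th N step.\<close>
fun nabsc :: "walk \<Rightarrow> nat \<Rightarrow> nat" where
  "nabsc [] k = 0"
| "nabsc (E # w) k = Suc (nabsc w k)"
| "nabsc (N # w) 0 = 0"
| "nabsc (N # w) (Suc k) = nabsc w k"

definition above :: "walk \<Rightarrow> walk \<Rightarrow> bool" where
  "above g' g \<longleftrightarrow> endpoint g' = endpoint g \<and> (\<forall>x < ecount g. eheight g x \<le> eheight g' x)"

definition Wset :: "walk \<Rightarrow> walk set" where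
  "Wset \<nu> = {g. above g \<nu>}"

definition pt :: "walk \<Rightarrow> nat \<Rightarrow> nat \<times> nat" where
  "pt g k = endpoint (take k g)"

text \<open>horizontal distance ell(p) of the point p = pt g k to nu\<close>
definition ell :: "walk \<Rightarrow> walk \<Rightarrow> nat \<Rightarrow> int" where
  "ell \<nu> g k = (let (x, y) = pt g k;
                  x' = (if y = ncount \<nu> then ecount \<nu> else nabsc \<nu> y)
              in int x' - int x)"

text \<open>push \<nu> g h: h = push_p(g) for some valley point p = pt g k of g
  (preceded by E, followed by N); p' = pt g k' is the next point after p with the
  same ell, and the E step preceding p is moved to just after p'.\<close>
definition push :: "walk \<Rightarrow> walk \<Rightarrow> walk \<Rightarrow> bool" where
  "push \<nu> g h \<longleftrightarrow> (\<exists>k k'. 0 < k \<and> k < length g \<and> g ! (k - 1) = E \<and> g ! k = N \<and>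
      k < k' \<and> k' \<le> length g \<and> ell \<nu> g k' = ell \<nu> g k \<and>
      (\<forall>m. k < m \<and> m < k' \<longrightarrow> ell \<nu> g m \<noteq> ell \<nu> g k) \<and>
      h = take (k - 1) g @ drop k (take k' g) @ [E] @ drop k' g)"

definition tam_le :: "walk \<Rightarrow> walk \<Rightarrow> walk \<Rightarrow> bool" where
  "tam_le \<nu> g g' \<longleftrightarrow> g \<in> Wset \<nu> \<and> g' \<in> Wset \<nu> \<and>
     (\<lambda>a b. a \<in> Wset \<nu> \<and> b \<in> Wset \<nu> \<and> push \<nu> a b)\<^sup>*\<^sup>* g g'"

definition Gset :: "nat \<Rightarrow> nat \<Rightarrow> (walk \<times> walk \<times> walk) set" where
  "Gset i j = {(\<nu>, g, g'). endpoint \<nu> = (i, j) \<and> g \<in> Wset \<nu> \<and> g' \<in> Wset \<nu> \<and> tam_le \<nu> g g'}"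

definition Rset :: "nat \<Rightarrow> nat \<Rightarrow> (walk \<times> walk \<times> walk) set" where
  "Rset i j = {(\<nu>, g, g'). endpoint \<nu> = (i, j) \<and> endpoint g = (i, j) \<and> endpoint g' = (i, j) \<and>
                above g' g \<and> above g \<nu>}"

definition mir :: "walk \<Rightarrow> walk" where "mir w = rev w"

definition tau :: "walk \<times> walk \<times> walk \<Rightarrow> walk \<times> walk \<times> walk" where
  "tau R = (case R of (lo, mid, up) \<Rightarrow> (mir up, mir mid, mir lo))"

end

theory Submission
  imports Defs
begin

text \<open>A walk to \<open>(i, j)\<close> is encoded by its profile, the sequence of abscissae of its North steps.
  For the profiles \<open>U\<close>, \<open>V\<close>, \<open>W\<close> of \<open>\<nu>\<close>, \<open>\<gamma>\<close>, \<open>\<gamma>'\<close>, a push lowers \<open>V\<close> by one on a segment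
  that ends at the first return of the distance \<open>U - V\<close>. This turns \<open>\<gamma> \<le> \<gamma>'\<close> in \<open>Tam(\<nu>)\<close>
  into an arithmetic condition: every return of \<open>U - W\<close> to a level inside a row of \<open>\<nu>\<close> is
  matched, no later, by a return of \<open>U - V\<close> to the same level. Pushes preserve the condition,
  and conversely a push at the first index where \<open>V\<close> and \<open>W\<close> differ keeps it, so it
  characterises the order.

  Mirroring the three walks reflects their profiles, \<open>X \<mapsto> (\<lambda>k. i - X (j + 1 - k))\<close>, and swaps
  the roles of \<open>\<nu>\<close> and \<open>\<gamma>'\<close>. The condition survives this reflection because a violation of
  minimal span reflects to a violation of the reflected condition.\<close>

section \<open>Walks and their profiles\<close>

lemma ecount_simps [simp]:
  "ecount [] = 0" "ecount (E # w) = Suc (ecount w)" "ecount (N # w) = ecount w"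
  "ecount (xs @ ys) = ecount xs + ecount ys"
  unfolding ecount_def by auto

lemma ncount_simps [simp]:
  "ncount [] = 0" "ncount (N # w) = Suc (ncount w)" "ncount (E # w) = ncount w"
  "ncount (xs @ ys) = ncount xs + ncount ys"
  unfolding ncount_def by auto

lemma ecount_rev [simp]: "ecount (rev w) = ecount w"
  unfolding ecount_def by (simp flip: rev_filter)

lemma ncount_rev [simp]: "ncount (rev w) = ncount w"
  unfolding ncount_def by (simp flip: rev_filter)

lemma endpoint_rev [simp]: "endpoint (rev w) = endpoint w"
  unfolding endpoint_def by simp

lemma endpoint_eq_iff: "endpoint w = (i, j) \<longleftrightarrow> ecount w = i \<and> ncount w = j"
  unfolding endpoint_def by simp

lemma length_eq_ecount_plus_ncount: "length w = ecount w + ncount w"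
proof (induction w)
  case (Cons s w) then show ?case by (cases s) auto
qed simp

lemma ncount_take_le: "ncount (take m w) \<le> ncount w"
  using ncount_simps(4)[of "take m w" "drop m w"] by simp

lemma nabsc_append:
  "nabsc (xs @ ys) y = (if y < ncount xs then nabsc xs y else ecount xs + nabsc ys (y - ncount xs))"
proof (induction xs arbitrary: y)
  case (Cons s xs) then show ?case by (cases s; cases y) auto
qed simp

lemma nabsc_le_ecount: "nabsc w y \<le> ecount w"
proof (induction w arbitrary: y)
  case (Cons s w) then show ?case by (cases s; cases y) (auto simp: le_SucI)
qed simp

lemma nabsc_eq_ecount: "ncount w \<le> y \<Longrightarrow> nabsc w y = ecount w"
proof (induction w arbitrary: y)
  case (Cons s w) then show ?case by (cases s; cases y) auto
qed simp

lemma nabsc_mono: "y \<le> y' \<Longrightarrow> nabsc w y \<le> nabsc w y'"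
proof (induction w arbitrary: y y')
  case (Cons s w) then show ?case by (cases s; cases y; cases y') auto
qed simp

lemma eheight_le_ncount: "eheight w x \<le> ncount w"
proof (induction w arbitrary: x)
  case (Cons s w) then show ?case by (cases s; cases x) (auto simp: le_SucI)
qed simp

lemma less_eheight_iff_nabsc_le: "y < ncount w \<Longrightarrow> y < eheight w x \<longleftrightarrow> nabsc w y \<le> x"
proof (induction w arbitrary: x y)
  case (Cons s w) then show ?case by (cases s; cases x; cases y) auto
qed simp

lemma above_iff_nabsc_le:
  assumes "endpoint g' = endpoint g"
  shows "above g' g \<longleftrightarrow> (\<forall>y < ncount g. nabsc g' y \<le> nabsc g y)"
proof
  have counts: "ecount g' = ecount g" "ncount g' = ncount g"
    using assms unfolding endpoint_def by auto
  show "above g' g" if le: "\<forall>y < ncount g. nabsc g' y \<le> nabsc g y"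
    unfolding above_def
  proof (intro conjI allI impI assms leI notI)
    fix x assume "eheight g' x < eheight g x"
    moreover from this have "eheight g' x < ncount g"
      using eheight_le_ncount[of g x] by simp
    ultimately show False
      using le less_eheight_iff_nabsc_le[of "eheight g' x" g x]
        less_eheight_iff_nabsc_le[of "eheight g' x" g' x] counts by fastforce
  qed
  show "\<forall>y < ncount g. nabsc g' y \<le> nabsc g y" if ab: "above g' g"
  proof (intro allI impI leI notI)
    fix y assume y: "y < ncount g" and less: "nabsc g y < nabsc g' y"
    have "nabsc g y < ecount g"
      using less nabsc_le_ecount[of g' y] counts by simp
    have "y < eheight g (nabsc g y)"
      using less_eheight_iff_nabsc_le[OF y] by simp
    also have "\<dots> \<le> eheight g' (nabsc g y)"
      using ab \<open>nabsc g y < ecount g\<close> unfolding above_def by simp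
    finally show False
      using less y less_eheight_iff_nabsc_le[of y g'] counts by simp
  qed
qed

lemma nabsc_inject:
  "endpoint g = endpoint g' \<Longrightarrow> \<forall>y < ncount g. nabsc g y = nabsc g' y \<Longrightarrow> g = g'"
proof (induction g arbitrary: g')
  case Nil then show ?case
    using length_eq_ecount_plus_ncount[of g'] unfolding endpoint_def by auto
next
  case (Cons s w)
  obtain s' w' where g': "g' = s' # w'"
    using Cons.prems(1) by (cases g'; cases s) (auto simp: endpoint_def)
  show ?case
  proof (cases s; cases s')
    assume "s = N" "s' = N"
    then show ?thesis
      using Cons.prems Cons.IH[of w'] unfolding g' endpoint_def by force
  next
    assume "s = E" "s' = E"
    then show ?thesis
      using Cons.prems Cons.IH[of w'] unfolding g' endpoint_def by force
  qed (use Cons.prems g' in \<open>auto simp: endpoint_def dest: spec[of _ 0]\<close>)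
qed

lemma nabsc_rev: "y < ncount w \<Longrightarrow> nabsc (rev w) y = ecount w - nabsc w (ncount w - 1 - y)"
proof (induction w arbitrary: y)
  case (Cons s w)
  show ?case
  proof (cases s)
    case E
    then show ?thesis
      using Cons nabsc_le_ecount[of w "ncount w - 1 - y"] by (simp add: nabsc_append)
  next
    case N
    show ?thesis
    proof (cases "y < ncount w")
      case True
      then have "ncount w - y = Suc (ncount w - 1 - y)" by simp
      then show ?thesis using Cons True N by (simp add: nabsc_append)
    qed (use Cons.prems N in \<open>simp add: nabsc_append\<close>)
  qed
qed simp

text \<open>The profile lists the abscissae of the North steps, shifted by one and padded by \<open>0\<close> in
  front and by the final abscissa behind: a walk to \<open>(i, j)\<close> becomes a monotone sequence from
  \<open>0\<close> to \<open>i\<close> on \<open>{0..Suc j}\<close>.\<close>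

definition profile :: "walk \<Rightarrow> nat \<Rightarrow> int" where
  "profile w x = (if x = 0 then 0 else int (nabsc w (x - 1)))"

lemma profile_0 [simp]: "profile w 0 = 0"
  unfolding profile_def by simp

lemma profile_Suc [simp]: "profile w (Suc y) = int (nabsc w y)"
  unfolding profile_def by simp

lemma profile_le_Suc: "profile w x \<le> profile w (Suc x)"
  by (cases x) (auto simp: nabsc_mono)

lemma profile_eq_ecount: "endpoint w = (i, j) \<Longrightarrow> Suc j \<le> x \<Longrightarrow> profile w x = int i"
  using nabsc_eq_ecount[of w "x - 1"] unfolding endpoint_def profile_def by auto

lemma above_iff_profile_le:
  assumes "endpoint g' = (i, j)" "endpoint g = (i, j)"
  shows "above g' g \<longleftrightarrow> (\<forall>x. profile g' x \<le> profile g x)"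
proof -
  have "(\<forall>y < j. nabsc g' y \<le> nabsc g y) \<longleftrightarrow> (\<forall>x. profile g' x \<le> profile g x)"
  proof
    assume le: "\<forall>y < j. nabsc g' y \<le> nabsc g y"
    show "\<forall>x. profile g' x \<le> profile g x"
    proof
      fix x
      show "profile g' x \<le> profile g x"
      proof (cases x)
        case (Suc y)
        then show ?thesis
          using le profile_eq_ecount[OF assms(1), of x] profile_eq_ecount[OF assms(2), of x]
          by (cases "y < j") auto
      qed simp
    qed
  qed (metis profile_Suc of_nat_le_iff)
  then show ?thesis
    using above_iff_nabsc_le[of g' g] assms by (simp add: endpoint_eq_iff)
qed

lemma mem_Wset_iff: "g \<in> Wset \<nu> \<longleftrightarrow> above g \<nu>"
  unfolding Wset_def by simp

lemma endpoint_if_above: "above g \<nu> \<Longrightarrow> endpoint g = endpoint \<nu>"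
  unfolding above_def by simp

lemma above_trans:
  assumes "endpoint a = (i, j)" "endpoint b = (i, j)" "endpoint c = (i, j)"
    and "above a b" "above b c"
  shows "above a c"
  using assms above_iff_profile_le[of a i j b] above_iff_profile_le[of b i j c]
    above_iff_profile_le[of a i j c] by (meson order_trans)

lemma profile_rev:
  assumes "endpoint w = (i, j)" "x \<le> Suc j"
  shows "profile (rev w) x = int i - profile w (Suc j - x)"
proof (cases x)
  case 0
  then show ?thesis using profile_eq_ecount[OF assms(1), of "Suc j"] by simp
next
  case (Suc y)
  have counts: "ecount w = i" "ncount w = j"
    using assms(1) by (auto simp: endpoint_eq_iff)
  show ?thesis
  proof (cases "y < j")
    case True
    then have "Suc j - x = Suc (j - 1 - y)" using Suc by simp
    then show ?thesis
      using Suc True counts nabsc_rev[of y w] nabsc_le_ecount[of w "j - 1 - y"] by simp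
  next
    case False
    then show ?thesis
      using Suc assms(2) counts nabsc_eq_ecount[of "rev w" y] by simp
  qed
qed

lemma above_rev:
  assumes "endpoint g = (i, j)" "endpoint g' = (i, j)" "above g' g"
  shows "above (rev g) (rev g')"
proof -
  have le: "profile g' x \<le> profile g x" for x
    using assms above_iff_profile_le by blast
  have "profile (rev g) x \<le> profile (rev g') x" for x
  proof (cases "x \<le> Suc j")
    case True
    then show ?thesis using le profile_rev[OF assms(1)] profile_rev[OF assms(2)] by simp
  next
    case False
    then show ?thesis using assms(1,2) profile_eq_ecount[of "rev _" i j x] by simp
  qed
  then show ?thesis using above_iff_profile_le assms(1,2) endpoint_rev by metis
qed

section \<open>The profile order and its self-duality\<close>

text \<open>Profile form of \<open>Tam(\<nu>)\<close>, for the profiles \<open>U\<close>, \<open>V\<close>, \<open>W\<close> of \<open>\<nu>\<close>, \<open>\<gamma>\<close>, \<open>\<gamma>'\<close> on \<open>{0..n}\<close>: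
  \<open>U x - V x\<close> is the distance \<open>\<ell>\<close> of \<open>\<gamma>\<close> just before its North step number \<open>x\<close>.\<close>

definition tam_profile_le :: "(nat \<Rightarrow> int) \<Rightarrow> (nat \<Rightarrow> int) \<Rightarrow> (nat \<Rightarrow> int) \<Rightarrow> nat \<Rightarrow> bool" where
  "tam_profile_le U V W n \<longleftrightarrow> (\<forall>p q t. p < q \<and> q \<le> n \<and> 0 \<le> t \<and> t < U (Suc p) - U p \<and>
      U q - W q \<le> U p - W p + t \<longrightarrow> (\<exists>k. p < k \<and> k \<le> q \<and> U k - V k \<le> U p - V p + t))"

definition tam_profile_violation ::
    "(nat \<Rightarrow> int) \<Rightarrow> (nat \<Rightarrow> int) \<Rightarrow> (nat \<Rightarrow> int) \<Rightarrow> nat \<Rightarrow> nat \<Rightarrow> nat \<Rightarrow> int \<Rightarrow> bool" where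
  "tam_profile_violation U V W n p q t \<longleftrightarrow> p < q \<and> q \<le> n \<and> 0 \<le> t \<and> t < U (Suc p) - U p \<and>
      U q - W q \<le> U p - W p + t \<and> (\<forall>k. p < k \<and> k < q \<longrightarrow> U p - W p + t < U k - W k) \<and>
      (\<forall>k. p < k \<and> k \<le> q \<longrightarrow> U p - V p + t < U k - V k)"

lemma tam_profile_le_refl: "tam_profile_le U V V n"
  unfolding tam_profile_le_def by auto

lemma tam_profile_le_trans:
  assumes "tam_profile_le U V1 V2 n" "tam_profile_le U V2 V3 n"
  shows "tam_profile_le U V1 V3 n"
  unfolding tam_profile_le_def
proof (intro allI impI)
  fix p q t
  assume H: "p < q \<and> q \<le> n \<and> 0 \<le> t \<and> t < U (Suc p) - U p \<and> U q - V3 q \<le> U p - V3 p + t"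
  obtain z where z: "p < z" "z \<le> q" "U z - V2 z \<le> U p - V2 p + t"
    using assms(2) H unfolding tam_profile_le_def by blast
  then obtain z' where "p < z'" "z' \<le> z" "U z' - V1 z' \<le> U p - V1 p + t"
    using assms(1) H unfolding tam_profile_le_def by (meson order_trans)
  then show "\<exists>k. p < k \<and> k \<le> q \<and> U k - V1 k \<le> U p - V1 p + t"
    using z by (meson order_trans)
qed

lemma tam_profile_le_cong:
  assumes "\<And>k. k \<le> n \<Longrightarrow> U k = U' k \<and> V k = V' k \<and> W k = W' k"
  shows "tam_profile_le U V W n = tam_profile_le U' V' W' n"
proof -
  have "U k = U' k" "V k = V' k" "W k = W' k" if "k \<le> n" for k
    using assms that by simp_all
  then show ?thesis
    unfolding tam_profile_le_def
    by (intro iff_allI imp_cong ex_cong conj_cong refl) (auto simp: Suc_le_eq)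
qed

lemma ex_tam_profile_violation:
  assumes "p < q" "q \<le> n" "0 \<le> t" "t < U (Suc p) - U p" "U q - W q \<le> U p - W p + t"
    and "\<forall>k. p < k \<and> k \<le> q \<longrightarrow> U p - V p + t < U k - V k"
  shows "\<exists>q' \<le> q. tam_profile_violation U V W n p q' t"
proof -
  define P where "P x \<longleftrightarrow> p < x \<and> U x - W x \<le> U p - W p + t" for x
  define q' where "q' = (LEAST x. P x)"
  have "P q" using assms unfolding P_def by simp
  then have "P q'" "q' \<le> q" "\<And>k. k < q' \<Longrightarrow> \<not> P k"
    unfolding q'_def by (auto intro: LeastI Least_le dest: not_less_Least)
  then show ?thesis
    using assms unfolding tam_profile_violation_def P_def by (intro exI[of _ q']) force
qed

lemma tam_profile_le_iff_no_violation:
  "tam_profile_le U V W n \<longleftrightarrow> (\<nexists>p q t. tam_profile_violation U V W n p q t)"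
proof
  assume "tam_profile_le U V W n"
  then show "\<nexists>p q t. tam_profile_violation U V W n p q t"
    unfolding tam_profile_le_def tam_profile_violation_def by (meson not_le)
next
  assume none: "\<nexists>p q t. tam_profile_violation U V W n p q t"
  show "tam_profile_le U V W n"
    unfolding tam_profile_le_def
    using ex_tam_profile_violation[where V = V and W = W] none by (meson not_le)
qed

text \<open>If \<open>U - V\<close> rises from \<open>p\<close> to \<open>m\<close> while \<open>V - W\<close> stays strictly above its value at \<open>m\<close>
  on \<open>[p, m)\<close>, then a violation starts at the last index \<open>y \<in> [p, m)\<close> with
  \<open>(U - V) y < (U - V) m\<close>.\<close>

lemma ex_violation_below:
  fixes U V W :: "nat \<Rightarrow> int"
  assumes monoV: "\<forall>x<n. V x \<le> V (Suc x)"
    and "p < m" "m \<le> n" "U p - V p < U m - V m"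
    and above_m: "\<And>x. p \<le> x \<Longrightarrow> x < m \<Longrightarrow> V m - W m < V x - W x"
  shows "\<exists>y q t. p \<le> y \<and> q \<le> m \<and> tam_profile_violation U V W n y q t"
proof -
  define a where "a x = U x - V x" for x
  define s where "s x = U x - W x" for x
  have "p < m \<and> a p < a m"
    using assms(2,4) unfolding a_def by simp
  define y where "y = (GREATEST x. p \<le> x \<and> x < m \<and> a x < a m)"
  have y: "p \<le> y" "y < m" "a y < a m"
    using GreatestI_nat[of "\<lambda>x. p \<le> x \<and> x < m \<and> a x < a m" p m] \<open>p < m \<and> _\<close>
    unfolding y_def by auto
  have after_y: "a m \<le> a x" if "y < x" "x < m" for x
    using Greatest_le_nat[of "\<lambda>x. p \<le> x \<and> x < m \<and> a x < a m" x m] that y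
    unfolding y_def[symmetric] by force
  define t where "t = max 0 (s m - s y)"
  have "a y + t < a m"
    using y above_m[of y] unfolding t_def a_def s_def by auto
  then have returns: "a y + t < a x" if "y < x" "x \<le> m" for x
    using after_y[of x] that by (cases "x = m") auto
  have "V y \<le> V (Suc y)"
    using monoV y \<open>m \<le> n\<close> by auto
  then have "t < U (Suc y) - U y"
    using returns[of "Suc y"] y unfolding a_def by auto
  moreover have "U m - W m \<le> U y - W y + t" "0 \<le> t"
    unfolding t_def s_def by auto
  ultimately obtain q where "q \<le> m" "tam_profile_violation U V W n y q t"
    using ex_tam_profile_violation[of y m n t U W V] y(2) \<open>m \<le> n\<close> returns[unfolded a_def]
    by blast
  then show ?thesis
    using y(1) by blast
qed

lemma minimal_violation_gap:
  fixes U V W :: "nat \<Rightarrow> int"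
  assumes monoV: "\<forall>x<n. V x \<le> V (Suc x)"
    and viol: "tam_profile_violation U V W n p q t"
    and minimal: "\<forall>p' q' t'. tam_profile_violation U V W n p' q' t' \<longrightarrow> q - p \<le> q' - p'"
    and m: "p \<le> m" "m < q"
  shows "V q - W q + max 0 ((U p - W p) - (U q - W q)) < V m - W m"
proof (rule ccontr)
  define b where "b x = V x - W x" for x
  define c where "c = b q + max 0 ((U p - W p) - (U q - W q))"
  have v: "p < q" "q \<le> n" "0 \<le> t" "U q - W q \<le> U p - W p + t"
    "\<And>k. p < k \<Longrightarrow> k \<le> q \<Longrightarrow> U p - V p + t < U k - V k"
    using viol unfolding tam_profile_violation_def by auto
  assume "\<not> ?thesis"
  then have ex: "p \<le> m \<and> m < q \<and> b m \<le> c"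
    using m unfolding b_def c_def by simp
  define m0 where "m0 = (LEAST x. p \<le> x \<and> x < q \<and> b x \<le> c)"
  have m0: "p \<le> m0" "m0 < q" "b m0 \<le> c"
    using LeastI[of "\<lambda>x. p \<le> x \<and> x < q \<and> b x \<le> c", OF ex] unfolding m0_def by auto
  have below_m0: "c < b x" if "p \<le> x" "x < m0" for x
    using not_less_Least[of x "\<lambda>x. p \<le> x \<and> x < q \<and> b x \<le> c"] that m0
    unfolding m0_def[symmetric] by force
  have "c < b p"
    using v(1,3,4) v(5)[of q] unfolding c_def b_def by auto
  then have "p < m0" using m0 by (cases "p = m0") auto
  moreover have "m0 \<le> n" "U p - V p < U m0 - V m0"
    using m0 v(2,3) v(5)[of m0] \<open>p < m0\<close> by auto
  moreover have "V m0 - W m0 < V x - W x" if "p \<le> x" "x < m0" for x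
    using below_m0[OF that] m0(3) unfolding b_def by simp
  ultimately obtain y q2 t2 where "p \<le> y" "q2 \<le> m0" "tam_profile_violation U V W n y q2 t2"
    using ex_violation_below[OF monoV, of p m0 U W] by blast
  moreover from this have "q - p \<le> q2 - y" "y < q2"
    using minimal unfolding tam_profile_violation_def by auto
  ultimately show False
    using m0(2) by linarith
qed

lemma minimal_violation_dual:
  fixes U V W :: "nat \<Rightarrow> int"
  assumes monoU: "\<forall>x<n. U x \<le> U (Suc x)" and monoV: "\<forall>x<n. V x \<le> V (Suc x)"
    and viol: "tam_profile_violation U V W n p q t"
    and minimal: "\<forall>p' q' t'. tam_profile_violation U V W n p' q' t' \<longrightarrow> q - p \<le> q' - p'"
  shows "\<exists>t'. tam_profile_violation (\<lambda>k. U n - W (n - k)) (\<lambda>k. U n - V (n - k))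
    (\<lambda>k. U n - U (n - k)) n (n - q) (n - p) t'"
proof -
  define s where "s x = U x - W x" for x
  define t' where "t' = max 0 (s p - s q)"
  have v: "p < q" "q \<le> n" "0 \<le> t" "t < U (Suc p) - U p" "s q \<le> s p + t"
    "\<And>k. p < k \<Longrightarrow> k < q \<Longrightarrow> s p + t < s k"
    using viol unfolding tam_profile_violation_def s_def by auto
  have row: "t' < W q - W (q - 1)"
  proof (cases "q = Suc p")
    case False
    then have "s p + t < s (q - 1)" using v(1) v(6)[of "q - 1"] by simp
    moreover have "U (q - 1) \<le> U q"
      using monoU v(1,2) by (cases q) auto
    ultimately show ?thesis
      using v unfolding t'_def s_def by auto
  qed (use v in \<open>auto simp: t'_def s_def\<close>)
  have gap: "V q - W q + t' < V m - W m" if "p \<le> m" "m < q" for m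
    using minimal_violation_gap[OF monoV viol minimal that] unfolding t'_def s_def .
  have flip: "n - (n - q) = q" "n - (n - p) = p" "n - Suc (n - q) = q - 1"
    using v by auto
  show ?thesis
    unfolding tam_profile_violation_def flip
  proof (intro exI[of _ t'] conjI allI impI)
    fix k assume "n - q < k \<and> k < n - p"
    then have "p < n - k" "n - k < q" using v(2) by auto
    then show "U n - W q - (U n - U q) + t' < U n - W (n - k) - (U n - U (n - k))"
      using v(6)[of "n - k"] v(3,5) unfolding t'_def s_def by auto
  next
    fix k assume "n - q < k \<and> k \<le> n - p"
    then show "U n - W q - (U n - V q) + t' < U n - W (n - k) - (U n - V (n - k))"
      using gap[of "n - k"] v(1,2) by auto
  qed (use v row in \<open>auto simp: t'_def s_def\<close>)
qed

lemma not_tam_profile_le_dual: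
  fixes U V W :: "nat \<Rightarrow> int"
  assumes "\<forall>x<n. U x \<le> U (Suc x)" "\<forall>x<n. V x \<le> V (Suc x)"
    and "\<not> tam_profile_le U V W n"
  shows "\<not> tam_profile_le (\<lambda>k. U n - W (n - k)) (\<lambda>k. U n - V (n - k)) (\<lambda>k. U n - U (n - k)) n"
proof -
  let ?span = "\<lambda>d. \<exists>p q t. tam_profile_violation U V W n p q t \<and> q - p = d"
  have "\<exists>d. ?span d"
    using assms(3) tam_profile_le_iff_no_violation by blast
  then obtain d where "?span d" and "\<And>d'. d' < d \<Longrightarrow> \<not> ?span d'"
    unfolding exists_least_iff[of ?span] by blast
  then obtain p q t where "tam_profile_violation U V W n p q t"
    and "\<forall>p' q' t'. tam_profile_violation U V W n p' q' t' \<longrightarrow> q - p \<le> q' - p'"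
    by (metis not_le)
  from minimal_violation_dual[OF assms(1,2) this] show ?thesis
    using tam_profile_le_iff_no_violation by blast
qed

text \<open>Reflecting all three profiles about the centre of the box exchanges the roles of the
  bound \<open>U\<close> and the upper walk \<open>W\<close>; this is what reversing the walks does.\<close>

theorem tam_profile_le_dual:
  fixes U V W :: "nat \<Rightarrow> int"
  assumes monoU: "\<forall>x<n. U x \<le> U (Suc x)" and monoV: "\<forall>x<n. V x \<le> V (Suc x)"
    and monoW: "\<forall>x<n. W x \<le> W (Suc x)" and "W 0 = 0" and "W n = U n"
  shows "tam_profile_le U V W n \<longleftrightarrow>
    tam_profile_le (\<lambda>k. U n - W (n - k)) (\<lambda>k. U n - V (n - k)) (\<lambda>k. U n - U (n - k)) n"
proof
  have mono_reflect: "\<forall>x<n. U n - X (n - x) \<le> U n - X (n - Suc x)"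
    if "\<forall>x<n. X x \<le> X (Suc x)" for X :: "nat \<Rightarrow> int"
  proof (intro allI impI)
    fix x assume "x < n"
    then show "U n - X (n - x) \<le> U n - X (n - Suc x)"
      using that[rule_format, of "n - Suc x"] by (simp add: Suc_diff_Suc)
  qed
  have twice: "tam_profile_le (\<lambda>k. U n - W (n - n) - (U n - U (n - (n - k))))
      (\<lambda>k. U n - W (n - n) - (U n - V (n - (n - k))))
      (\<lambda>k. U n - W (n - n) - (U n - W (n - (n - k)))) n = tam_profile_le U V W n"
    by (rule tam_profile_le_cong) (auto simp: assms(4))
  show "tam_profile_le (\<lambda>k. U n - W (n - k)) (\<lambda>k. U n - V (n - k)) (\<lambda>k. U n - U (n - k)) n"
    if "tam_profile_le U V W n"
  proof (rule ccontr)
    assume "\<not> ?thesis"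
    from not_tam_profile_le_dual[OF mono_reflect[OF monoW] mono_reflect[OF monoV] this]
    have "\<not> tam_profile_le (\<lambda>k. U n - W (n - n) - (U n - U (n - (n - k))))
      (\<lambda>k. U n - W (n - n) - (U n - V (n - (n - k))))
      (\<lambda>k. U n - W (n - n) - (U n - W (n - (n - k)))) n"
      using assms(5) by simp
    then show False using twice that by simp
  qed
qed (use not_tam_profile_le_dual[OF monoU monoV] in blast)

section \<open>Pushes on profiles and on walks\<close>

definition first_return :: "(nat \<Rightarrow> int) \<Rightarrow> nat \<Rightarrow> nat \<Rightarrow> bool" where
  "first_return D p r \<longleftrightarrow> p < r \<and> D r \<le> D p \<and> (\<forall>x. p < x \<and> x < r \<longrightarrow> D p < D x)"

lemma first_return_le: "first_return D p r \<Longrightarrow> p \<le> x \<Longrightarrow> x < r \<Longrightarrow> D p \<le> D x"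
  unfolding first_return_def by (auto simp: le_less)

text \<open>On profiles, a push lowers \<open>V\<close> by one on the segment \<open>[p, r)\<close>, where \<open>r\<close> is the first
  return of \<open>U - V\<close> after \<open>p\<close>.\<close>

lemma tam_profile_le_push:
  assumes ret: "first_return (\<lambda>x. U x - V x) p r" and "r \<le> n"
    and V': "\<And>x. x \<le> n \<Longrightarrow> V' x = (if p \<le> x \<and> x < r then V x - 1 else V x)"
  shows "tam_profile_le U V V' n"
  unfolding tam_profile_le_def
proof (intro allI impI)
  fix p' q t
  assume H: "p' < q \<and> q \<le> n \<and> 0 \<le> t \<and> t < U (Suc p') - U p' \<and> U q - V' q \<le> U p' - V' p' + t"
  show "\<exists>k. p' < k \<and> k \<le> q \<and> U k - V k \<le> U p' - V p' + t"
  proof (cases "U q - V q \<le> U p' - V p' + t")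
    case False
    then have "p \<le> p' \<and> p' < r \<and> r \<le> q"
      using H V'[of q] V'[of p'] by (auto split: if_splits)
    moreover from this have "U p - V p \<le> U p' - V p'"
      using first_return_le[OF ret] by simp
    ultimately show ?thesis
      using ret H unfolding first_return_def by (intro exI[of _ r]) auto
  qed (use H in auto)
qed

lemma tam_profile_le_strict_on_push_segment:
  fixes U V W :: "nat \<Rightarrow> int"
  assumes monoV: "\<forall>x<n. V x \<le> V (Suc x)" and WV: "\<And>x. x \<le> n \<Longrightarrow> W x \<le> V x"
    and le: "tam_profile_le U V W n"
    and "W p0 < V p0" and ret: "first_return (\<lambda>x. U x - V x) p0 r" and "r \<le> n"
    and x: "p0 \<le> x" "x < r"
  shows "W x < V x"
proof (rule ccontr)
  define a where "a x = U x - V x" for x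
  assume "\<not> ?thesis"
  then have ex: "p0 \<le> x \<and> x < r \<and> \<not> W x < V x" using x by auto
  define k where "k = (LEAST x. p0 \<le> x \<and> x < r \<and> \<not> W x < V x)"
  have k: "p0 \<le> k" "k < r" "\<not> W k < V k"
    using LeastI[of "\<lambda>x. p0 \<le> x \<and> x < r \<and> \<not> W x < V x", OF ex] unfolding k_def by auto
  have before_k: "W z < V z" if "p0 \<le> z" "z < k" for z
    using not_less_Least[of z "\<lambda>x. p0 \<le> x \<and> x < r \<and> \<not> W x < V x"] that k
    unfolding k_def[symmetric] by force
  have "p0 < k" using k \<open>W p0 < V p0\<close> by (cases "p0 = k") auto
  have Wk: "W k = V k" using k WV[of k] \<open>r \<le> n\<close> by auto
  have "a p0 < a k" using ret \<open>p0 < k\<close> k unfolding first_return_def a_def by auto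
  then have "p0 < k \<and> a p0 < a k" using \<open>p0 < k\<close> by simp
  define p where "p = (GREATEST z. p0 \<le> z \<and> z < k \<and> a z < a k)"
  have p: "p0 \<le> p" "p < k" "a p < a k"
    using GreatestI_nat[of "\<lambda>z. p0 \<le> z \<and> z < k \<and> a z < a k" p0 k] \<open>p0 < k \<and> _\<close>
    unfolding p_def by auto
  have after_p: "a k \<le> a z" if "p < z" "z < k" for z
    using Greatest_le_nat[of "\<lambda>z. p0 \<le> z \<and> z < k \<and> a z < a k" z k] that p
    unfolding p_def[symmetric] by force
  define t where "t = a k - a p - 1"
  have "a k \<le> a (Suc p)"
    using after_p[of "Suc p"] p by (cases "Suc p = k") auto
  moreover have "V p \<le> V (Suc p)" using monoV p k \<open>r \<le> n\<close> by auto
  ultimately have "t < U (Suc p) - U p" unfolding t_def a_def by auto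
  moreover have "W p < V p" using before_k[of p] p \<open>W p0 < V p0\<close> by (cases "p = p0") auto
  then have "U k - W k \<le> U p - W p + t" using Wk unfolding t_def a_def by auto
  ultimately obtain z where z: "p < z" "z \<le> k" "U z - V z \<le> U p - V p + t"
    using le[unfolded tam_profile_le_def, rule_format, of p k t] p k \<open>r \<le> n\<close>
    unfolding t_def by auto
  then show False
    using after_p[of z] unfolding t_def a_def by (cases "z = k") auto
qed

text \<open>Conversely, if \<open>\<gamma> \<le> \<gamma>'\<close> and \<open>p0\<close> is the first index where their profiles differ, the
  push of \<open>\<gamma>\<close> at \<open>p0\<close> is still below \<open>\<gamma>'\<close>; this is why pushes reach every larger walk.\<close>

lemma tam_profile_le_after_push:
  fixes U V W :: "nat \<Rightarrow> int"
  assumes monoV: "\<forall>x<n. V x \<le> V (Suc x)" and WV: "\<And>x. x \<le> n \<Longrightarrow> W x \<le> V x"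
    and le: "tam_profile_le U V W n"
    and "W p0 < V p0" and before: "\<And>x. x < p0 \<Longrightarrow> W x = V x"
    and ret: "first_return (\<lambda>x. U x - V x) p0 r" and "r \<le> n"
    and V': "\<And>x. x \<le> n \<Longrightarrow> V' x = (if p0 \<le> x \<and> x < r then V x - 1 else V x)"
  shows "(\<forall>x\<le>n. W x \<le> V' x) \<and> tam_profile_le U V' W n"
proof
  have inner: "W x < V x" if "p0 \<le> x" "x < r" for x
    using tam_profile_le_strict_on_push_segment[OF monoV WV le \<open>W p0 < V p0\<close> ret \<open>r \<le> n\<close> that] .
  then show "\<forall>x\<le>n. W x \<le> V' x"
    using V' WV by fastforce
  show "tam_profile_le U V' W n"
    unfolding tam_profile_le_def
  proof (intro allI impI)
    fix p q t
    assume H: "p < q \<and> q \<le> n \<and> 0 \<le> t \<and> t < U (Suc p) - U p \<and> U q - W q \<le> U p - W p + t"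
    obtain z where z: "p < z" "z \<le> q" "U z - V z \<le> U p - V p + t"
      using le H unfolding tam_profile_le_def by blast
    show "\<exists>k. p < k \<and> k \<le> q \<and> U k - V' k \<le> U p - V' p + t"
    proof (cases "U z - V' z \<le> U p - V' p + t")
      case False
      then have c: "p0 \<le> z" "z < r" "p < p0"
        using z H V'[of z] V'[of p] by (auto split: if_splits)
      then have "U p0 - V p0 \<le> U z - V z"
        using first_return_le[OF ret] by simp
      moreover have "U z - V z = U p - V p + t" "V' p = V p" "W p = V p"
        using False z H V'[of z] V'[of p] c before[of p] by auto
      ultimately show ?thesis
      proof (cases "r \<le> q")
        case True
        then show ?thesis
          using \<open>U p0 - V p0 \<le> _\<close> ret c V'[of r] \<open>r \<le> n\<close> \<open>U z - V z = _\<close> \<open>V' p = V p\<close>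
          unfolding first_return_def by (intro exI[of _ r]) auto
      next
        case False
        then show ?thesis
          using H c z inner[of q] V'[of q] \<open>V' p = V p\<close> \<open>W p = V p\<close> by (intro exI[of _ q]) auto
      qed
    qed (use z in auto)
  qed
qed

lemma discrete_ivt_down:
  fixes f :: "nat \<Rightarrow> int"
  assumes "a \<le> b" "L \<le> f a" "f b \<le> L" "\<And>m. a \<le> m \<Longrightarrow> m < b \<Longrightarrow> f m - 1 \<le> f (Suc m)"
  shows "\<exists>m. a \<le> m \<and> m \<le> b \<and> f m = L"
  using assms
proof (induction b rule: dec_induct)
  case (step b)
  show ?case
  proof (cases "f b \<le> L")
    case False
    then have "f (Suc b) = L" using step.prems step.hyps(1,2) by force
    then show ?thesis using step.hyps(1) by (intro exI[of _ "Suc b"]) auto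
  qed (use step in force)
qed (rule exI[of _ a], simp)

lemma ncount_take_mono: "m \<le> m' \<Longrightarrow> ncount (take m w) \<le> ncount (take m' w)"
  using ncount_take_le[of m "take m' w"] by (simp add: min_absorb1)

lemma ex_N_step_between:
  assumes "a \<le> b" "b \<le> length w" "ncount (take a w) \<le> y" "y < ncount (take b w)"
  shows "\<exists>m. a \<le> m \<and> m < b \<and> ncount (take m w) = y \<and> w ! m = N"
  using assms
proof (induction b rule: dec_induct)
  case (step b)
  show ?case
  proof (cases "y < ncount (take b w)")
    case False
    then have "w ! b = N \<and> y = ncount (take b w)"
      using step.prems by (cases "w ! b") (auto simp: take_Suc_conv_app_nth)
    then show ?thesis using step.hyps by (intro exI[of _ b]) auto
  qed (use step in force)
qed simp

lemma nabsc_at_N_step: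
  assumes "m < length w" "w ! m = N"
  shows "nabsc w (ncount (take m w)) = ecount (take m w)"
proof -
  have "w = take m w @ N # drop (Suc m) w"
    using id_take_nth_drop[OF assms(1)] assms(2) by simp
  then have "nabsc w (ncount (take m w)) = nabsc (take m w @ N # drop (Suc m) w) (ncount (take m w))"
    by (rule arg_cong)
  also have "\<dots> = ecount (take m w)"
    by (simp add: nabsc_append)
  finally show ?thesis .
qed

lemma ecount_take_le_nabsc: "ecount (take m w) \<le> nabsc w (ncount (take m w))"
  using nabsc_append[of "take m w" "drop m w" "ncount (take m w)"] by simp

lemma ell_eq_nabsc: "ell \<nu> g m = int (nabsc \<nu> (ncount (take m g))) - int (ecount (take m g))"
  unfolding ell_def pt_def endpoint_def using nabsc_eq_ecount[of \<nu> "ncount \<nu>"] by (auto simp: Let_def)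

lemma ell_le_Suc_at_N_step: "m < length g \<Longrightarrow> g ! m = N \<Longrightarrow> ell \<nu> g m \<le> ell \<nu> g (Suc m)"
  unfolding ell_eq_nabsc by (simp add: take_Suc_conv_app_nth nabsc_mono)

lemma ell_Suc_ge: "m < length g \<Longrightarrow> ell \<nu> g m - 1 \<le> ell \<nu> g (Suc m)"
  using ell_le_Suc_at_N_step[of m g \<nu>]
  by (cases "g ! m") (auto simp: ell_eq_nabsc take_Suc_conv_app_nth)

lemma ell_length: "endpoint g = endpoint \<nu> \<Longrightarrow> ell \<nu> g (length g) = 0"
  unfolding ell_eq_nabsc endpoint_def by (simp add: nabsc_eq_ecount)

definition push_at :: "walk \<Rightarrow> walk \<Rightarrow> nat \<Rightarrow> nat \<Rightarrow> bool" where
  "push_at \<nu> g k k' \<longleftrightarrow> 0 < k \<and> k < length g \<and> g ! (k - 1) = E \<and> g ! k = N \<and>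
      k < k' \<and> k' \<le> length g \<and> ell \<nu> g k' = ell \<nu> g k \<and>
      (\<forall>m. k < m \<and> m < k' \<longrightarrow> ell \<nu> g m \<noteq> ell \<nu> g k)"

definition push_walk :: "walk \<Rightarrow> nat \<Rightarrow> nat \<Rightarrow> walk" where
  "push_walk g k k' = take (k - 1) g @ drop k (take k' g) @ [E] @ drop k' g"

lemma push_iff_push_at: "push \<nu> g h \<longleftrightarrow> (\<exists>k k'. push_at \<nu> g k k' \<and> h = push_walk g k k')"
  unfolding push_def push_at_def push_walk_def by blast

lemma push_at_split:
  assumes "push_at \<nu> g k k'"
  shows "take k g = take (k - 1) g @ [E]" "take k' g = take k g @ drop k (take k' g)"
    and "g = take (k - 1) g @ E # drop k (take k' g) @ drop k' g"
proof -
  have "0 < k" "k < length g" "g ! (k - 1) = E" "k < k'"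
    using assms unfolding push_at_def by auto
  then show take_k: "take k g = take (k - 1) g @ [E]"
    using take_Suc_conv_app_nth[of "k - 1" g] by simp
  show take_k': "take k' g = take k g @ drop k (take k' g)"
    using append_take_drop_id[of k "take k' g"] \<open>k < k'\<close> by (simp add: min_absorb1)
  show "g = take (k - 1) g @ E # drop k (take k' g) @ drop k' g"
  proof -
    have "take k' g = take (k - 1) g @ E # drop k (take k' g)"
      by (subst take_k') (simp add: take_k)
    then show ?thesis
      using append_take_drop_id[of k' g] by (metis append_Cons append_assoc append_Nil)
  qed
qed

lemma profile_move_E:
  "profile (A @ B @ E # C) x =
    (if ncount A < x \<and> x \<le> ncount A + ncount B then profile (A @ E # B @ C) x - 1
     else profile (A @ E # B @ C) x)"
  by (cases x) (auto simp: nabsc_append)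

lemma push_walk_split:
  assumes "push_at \<nu> g k k'"
  obtains A B C where "g = A @ E # B @ C" "push_walk g k k' = A @ B @ E # C"
    "ncount (take k g) = ncount A" "ncount (take k' g) = ncount A + ncount B"
proof
  show "g = take (k - 1) g @ E # drop k (take k' g) @ drop k' g"
    by (rule push_at_split(3)[OF assms])
  show "push_walk g k k' = take (k - 1) g @ drop k (take k' g) @ E # drop k' g"
    unfolding push_walk_def by simp
  show "ncount (take k g) = ncount (take (k - 1) g)"
    using push_at_split(1)[OF assms] by simp
  show "ncount (take k' g) = ncount (take (k - 1) g) + ncount (drop k (take k' g))"
    using arg_cong[where f = ncount, OF push_at_split(2)[OF assms]] push_at_split(1)[OF assms] by simp
qed

lemma profile_push_walk:
  assumes "push_at \<nu> g k k'"
  shows "profile (push_walk g k k') x =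
    (if Suc (ncount (take k g)) \<le> x \<and> x < Suc (ncount (take k' g)) then profile g x - 1 else profile g x)"
proof -
  obtain A B C where "g = A @ E # B @ C" "push_walk g k k' = A @ B @ E # C"
    "ncount (take k g) = ncount A" "ncount (take k' g) = ncount A + ncount B"
    using push_walk_split[OF assms] .
  then show ?thesis
    using profile_move_E[of A B C x] by (simp add: Suc_le_eq)
qed

lemma endpoint_push_walk:
  assumes "push_at \<nu> g k k'"
  shows "endpoint (push_walk g k k') = endpoint g"
proof -
  obtain A B C where "g = A @ E # B @ C" "push_walk g k k' = A @ B @ E # C"
    using push_walk_split[OF assms] .
  then show ?thesis by (simp add: endpoint_def)
qed

lemma sum_nabsc_push_walk_less:
  assumes "push_at \<nu> g k k'"
  shows "(\<Sum>y<ncount g. nabsc (push_walk g k k') y) < (\<Sum>y<ncount g. nabsc g y)"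
proof (rule sum_strict_mono_ex1)
  show "finite {..<ncount g}" by simp
  have k: "k < length g" "g ! k = N" "k < k'"
    using assms unfolding push_at_def by auto
  have drop: "nabsc (push_walk g k k') y = (if ncount (take k g) \<le> y \<and> y < ncount (take k' g)
      then nabsc g y - 1 else nabsc g y)" for y
    using profile_push_walk[OF assms, of "Suc y"] by (auto split: if_splits)
  then show "\<forall>y\<in>{..<ncount g}. nabsc (push_walk g k k') y \<le> nabsc g y"
    by simp
  have "ncount (take k g) < ncount (take k' g)"
    using ncount_take_mono[of "Suc k" k' g] k by (simp add: take_Suc_conv_app_nth)
  moreover have "0 < nabsc g (ncount (take k g))"
    using push_at_split(1)[OF assms] nabsc_at_N_step[OF k(1,2)] by simp
  ultimately show "\<exists>y\<in>{..<ncount g}. nabsc (push_walk g k k') y < nabsc g y"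
    using drop[of "ncount (take k g)"] ncount_take_le[of k' g]
    by (intro bexI[of _ "ncount (take k g)"]) auto
qed

lemma push_at_ell_greater:
  assumes push: "push_at \<nu> g k k'" and m: "k < m" "m < k'"
  shows "ell \<nu> g k < ell \<nu> g m"
proof -
  have k: "k < length g" "g ! k = N" "k' \<le> length g"
    and avoid: "\<And>m. k < m \<Longrightarrow> m < k' \<Longrightarrow> ell \<nu> g m \<noteq> ell \<nu> g k"
    using push unfolding push_at_def by auto
  from m have "Suc k \<le> m" by simp
  then show ?thesis
    using \<open>m < k'\<close>
  proof (induction m rule: dec_induct)
    case base
    then show ?case
      using ell_le_Suc_at_N_step[OF k(1,2), where \<nu> = \<nu>] avoid[of "Suc k"] by fastforce
  next
    case (step m)
    then show ?case
      using ell_Suc_ge[of m g \<nu>] avoid[of "Suc m"] k(3) by fastforce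
  qed
qed

text \<open>Along the walk, \<open>\<ell>\<close> at the start of the North step of height \<open>y\<close> is the profile distance
  \<open>profile \<nu> (Suc y) - profile g (Suc y)\<close>. So the valley of a push sits at profile index
  \<open>Suc (ncount (take k g))\<close>, and the first return of \<open>\<ell>\<close> becomes a first return of the
  profile distance.\<close>

lemma push_at_first_return:
  assumes push: "push_at \<nu> g k k'"
  shows "first_return (\<lambda>x. profile \<nu> x - profile g x) (Suc (ncount (take k g))) (Suc (ncount (take k' g)))"
proof -
  have k: "k < length g" "g ! k = N" "k < k'" "k' \<le> length g" "ell \<nu> g k' = ell \<nu> g k"
    using push unfolding push_at_def by auto
  have take_Suc_k: "take (Suc k) g = take k g @ [N]"
    using k by (simp add: take_Suc_conv_app_nth)
  define D where "D x = profile \<nu> x - profile g x" for x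
  have ell_N_step: "ell \<nu> g m = D (Suc (ncount (take m g)))" if "m < length g" "g ! m = N" for m
    using nabsc_at_N_step[OF that] unfolding ell_eq_nabsc D_def by simp
  have "Suc (ncount (take k g)) < Suc (ncount (take k' g))"
    using ncount_take_mono[of "Suc k" k' g] take_Suc_k k by simp
  moreover have "D (Suc (ncount (take k' g))) \<le> D (Suc (ncount (take k g)))"
    using ecount_take_le_nabsc[of k' g] ell_N_step[OF k(1,2)] k(5)
    unfolding ell_eq_nabsc D_def by simp
  moreover have "D (Suc (ncount (take k g))) < D x"
    if x: "Suc (ncount (take k g)) < x" "x < Suc (ncount (take k' g))" for x
  proof -
    obtain y where y: "x = Suc y" using x by (cases x) auto
    obtain m where "Suc k \<le> m" "m < k'" "ncount (take m g) = y" "g ! m = N"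
      using ex_N_step_between[of "Suc k" k' g y] x k take_Suc_k y by auto
    then show ?thesis
      using push_at_ell_greater[OF push, of m] ell_N_step[of m] ell_N_step[OF k(1,2)] k y by simp
  qed
  ultimately show ?thesis
    unfolding first_return_def D_def by blast
qed

lemma valley_is_N_step_after_E:
  assumes "endpoint g = (i, j)" "y < j" "profile g y < profile g (Suc y)"
  obtains k where "0 < k" "k < length g" "g ! (k - 1) = E" "g ! k = N" "ncount (take k g) = y"
proof -
  have "ncount g = j" using assms(1) by (simp add: endpoint_eq_iff)
  then obtain k where k: "k < length g" "ncount (take k g) = y" "g ! k = N"
    using ex_N_step_between[of 0 "length g" g y] assms(2) by auto
  have at_k: "profile g (Suc y) = int (ecount (take k g))"
    using nabsc_at_N_step[OF k(1,3)] k(2) by simp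
  have "0 < k"
    using assms(3) at_k by (cases y) (auto intro: Nat.gr0I)
  moreover have "g ! (k - 1) = E"
  proof (rule ccontr)
    assume "g ! (k - 1) \<noteq> E"
    then have N: "g ! (k - 1) = N" by (cases "g ! (k - 1)") auto
    have take_k: "take k g = take (k - 1) g @ [N]"
      using take_Suc_conv_app_nth[of "k - 1" g] k(1) \<open>0 < k\<close> N by simp
    then have "y = Suc (ncount (take (k - 1) g))" using k(2) by simp
    then have "profile g y = int (ecount (take (k - 1) g))"
      using nabsc_at_N_step[of "k - 1" g] N k(1) by simp
    then show False using assms(3) at_k take_k by simp
  qed
  ultimately show ?thesis using that k by blast
qed

lemma push_at_exists:
  assumes "endpoint \<nu> = (i, j)" "endpoint g = (i, j)" "above g \<nu>"
    and "y < j" "profile g y < profile g (Suc y)"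
  shows "\<exists>k k'. push_at \<nu> g k k' \<and> ncount (take k g) = y"
proof -
  obtain k where k: "0 < k" "k < length g" "g ! (k - 1) = E" "g ! k = N" "ncount (take k g) = y"
    using valley_is_N_step_after_E[OF assms(2,4,5)] .
  have "endpoint g = endpoint \<nu>" using assms(1,2) by simp
  then have "\<forall>y < ncount \<nu>. nabsc g y \<le> nabsc \<nu> y"
    using above_iff_nabsc_le assms(3) by blast
  then have "nabsc g y \<le> nabsc \<nu> y"
    using assms(1,4) by (simp add: endpoint_eq_iff)
  then have "0 \<le> ell \<nu> g k"
    using nabsc_at_N_step[OF k(2,4)] k(5) unfolding ell_eq_nabsc by simp
  moreover have "ell \<nu> g k \<le> ell \<nu> g (Suc k)"
    using ell_le_Suc_at_N_step[OF k(2,4)] .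
  ultimately obtain m where "Suc k \<le> m" "m \<le> length g" "ell \<nu> g m = ell \<nu> g k"
    using discrete_ivt_down[of "Suc k" "length g" "ell \<nu> g k" "ell \<nu> g"] k(2)
      ell_length[of g \<nu>] assms(1,2) ell_Suc_ge[of _ g \<nu>] by auto
  then have ex: "k < m \<and> m \<le> length g \<and> ell \<nu> g m = ell \<nu> g k" by simp
  define k' where "k' = (LEAST m. k < m \<and> m \<le> length g \<and> ell \<nu> g m = ell \<nu> g k)"
  have "k < k'" "k' \<le> length g" "ell \<nu> g k' = ell \<nu> g k"
    using LeastI[of "\<lambda>m. k < m \<and> m \<le> length g \<and> ell \<nu> g m = ell \<nu> g k", OF ex]
    unfolding k'_def by auto
  moreover have "ell \<nu> g m \<noteq> ell \<nu> g k" if "k < m" "m < k'" for m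
    using not_less_Least[of m "\<lambda>m. k < m \<and> m \<le> length g \<and> ell \<nu> g m = ell \<nu> g k"] that
      \<open>k' \<le> length g\<close> unfolding k'_def[symmetric] by auto
  ultimately show ?thesis
    using k unfolding push_at_def by blast
qed

section \<open>The order \<open>Tam(\<nu>)\<close> on profiles\<close>

lemma first_difference_is_valley:
  fixes V W :: "nat \<Rightarrow> int"
  assumes "\<And>y. W y \<le> V y" "\<And>y. W y \<le> W (Suc y)" "W 0 = V 0" "W x < V x"
  obtains p where "0 < p" "p \<le> x" "W p < V p" "\<And>y. y < p \<Longrightarrow> W y = V y" "V (p - 1) < V p"
proof
  define p where "p = (LEAST p. W p < V p)"
  show "W p < V p" "p \<le> x"
    unfolding p_def using assms(4) by (auto intro: LeastI Least_le)
  show before: "W y = V y" if "y < p" for y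
    using not_less_Least[of y "\<lambda>p. W p < V p"] that assms(1)[of y] unfolding p_def[symmetric] by simp
  show "0 < p"
    using \<open>W p < V p\<close> assms(3) by (cases p) auto
  then show "V (p - 1) < V p"
    using before[of "p - 1"] assms(2)[of "p - 1"] \<open>W p < V p\<close> by simp
qed

lemma tam_profile_le_if_pushes:
  assumes "endpoint \<nu> = (i, j)"
    and "(\<lambda>a b. a \<in> Wset \<nu> \<and> b \<in> Wset \<nu> \<and> push \<nu> a b)\<^sup>*\<^sup>* g g'"
  shows "tam_profile_le (profile \<nu>) (profile g) (profile g') (Suc j)"
  using assms(2)
proof (induction rule: rtranclp_induct)
  case (step b c)
  have "above b \<nu>" "push \<nu> b c"
    using step.hyps by (auto simp: mem_Wset_iff)
  then have b: "endpoint b = (i, j)"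
    using endpoint_if_above assms(1) by simp
  obtain k k' where push: "push_at \<nu> b k k'" "c = push_walk b k k'"
    using \<open>push \<nu> b c\<close> push_iff_push_at by blast
  have "Suc (ncount (take k' b)) \<le> Suc j"
    using ncount_take_le[of k' b] b by (simp add: endpoint_eq_iff)
  then have "tam_profile_le (profile \<nu>) (profile b) (profile c) (Suc j)"
    using tam_profile_le_push[OF push_at_first_return[OF push(1)]] profile_push_walk[OF push(1)]
      push(2) by blast
  with step.IH show ?case
    by (rule tam_profile_le_trans)
qed (rule tam_profile_le_refl)

text \<open>One push from \<open>\<gamma>\<close> towards \<open>\<gamma>'\<close>: push at the first index where their profiles differ.\<close>

lemma ex_push_towards:
  assumes \<nu>: "endpoint \<nu> = (i, j)" and g: "endpoint g = (i, j)" and g': "endpoint g' = (i, j)"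
    and g\<nu>: "above g \<nu>" and g'g: "above g' g" and "g \<noteq> g'"
    and le: "tam_profile_le (profile \<nu>) (profile g) (profile g') (Suc j)"
  obtains h where "push \<nu> g h" "endpoint h = (i, j)" "above h \<nu>" "above g' h"
    "tam_profile_le (profile \<nu>) (profile h) (profile g') (Suc j)"
    "(\<Sum>y<j. nabsc h y) < (\<Sum>y<j. nabsc g y)"
proof -
  have g'_le_g: "profile g' x \<le> profile g x" for x
    using above_iff_profile_le[OF g' g] g'g by simp
  obtain y where "y < j" "nabsc g y \<noteq> nabsc g' y"
    using nabsc_inject[of g g'] g g' \<open>g \<noteq> g'\<close> by (auto simp: endpoint_eq_iff)
  then have "profile g' (Suc y) < profile g (Suc y)"
    using g'_le_g[of "Suc y"] by simp
  moreover have "profile g' 0 = profile g 0" by simp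
  ultimately obtain p where p: "0 < p" "profile g' p < profile g p"
    "\<And>x. x < p \<Longrightarrow> profile g' x = profile g x" "profile g (p - 1) < profile g p" "p \<le> Suc y"
    using first_difference_is_valley[of "profile g'" "profile g", OF g'_le_g profile_le_Suc] by metis
  obtain k k' where push: "push_at \<nu> g k k'" "ncount (take k g) = p - 1"
    using push_at_exists[OF \<nu> g g\<nu>, of "p - 1"] p(1,4,5) \<open>y < j\<close> by fastforce
  define h where "h = push_walk g k k'"
  have p_eq: "Suc (ncount (take k g)) = p" using push(2) p(1) by simp
  have r: "Suc (ncount (take k' g)) \<le> Suc j"
    using ncount_take_le[of k' g] g by (simp add: endpoint_eq_iff)
  have "(\<forall>x\<le>Suc j. profile g' x \<le> profile h x) \<and> tam_profile_le (profile \<nu>) (profile h) (profile g') (Suc j)"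
    using tam_profile_le_after_push[OF _ _ le p(2) p(3) push_at_first_return[OF push(1), unfolded p_eq] r]
      profile_push_walk[OF push(1)] g'_le_g profile_le_Suc unfolding h_def p_eq by blast
  moreover have h: "endpoint h = (i, j)"
    using endpoint_push_walk[OF push(1)] g unfolding h_def by simp
  moreover have "profile h x \<le> profile g x" for x
    using profile_push_walk[OF push(1), of x] unfolding h_def by simp
  then have "above h \<nu>"
    using g\<nu> above_iff_profile_le[OF h \<nu>] above_iff_profile_le[OF g \<nu>] by (meson order_trans)
  moreover have "above g' h"
    unfolding above_iff_profile_le[OF g' h]
    using calculation(1) profile_eq_ecount[OF g'] profile_eq_ecount[OF h] by (metis nle_le)
  moreover have "(\<Sum>y<j. nabsc h y) < (\<Sum>y<j. nabsc g y)"
    using sum_nabsc_push_walk_less[OF push(1)] g unfolding h_def by (simp add: endpoint_eq_iff)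
  moreover have "push \<nu> g h"
    using push_iff_push_at push(1) unfolding h_def by blast
  ultimately show ?thesis
    using that by blast
qed

lemma pushes_if_tam_profile_le:
  assumes \<nu>: "endpoint \<nu> = (i, j)" and g': "endpoint g' = (i, j)"
  shows "endpoint g = (i, j) \<Longrightarrow> above g \<nu> \<Longrightarrow> above g' g \<Longrightarrow>
    tam_profile_le (profile \<nu>) (profile g) (profile g') (Suc j) \<Longrightarrow>
    (\<lambda>a b. a \<in> Wset \<nu> \<and> b \<in> Wset \<nu> \<and> push \<nu> a b)\<^sup>*\<^sup>* g g'"
proof (induction "\<Sum>y<j. nabsc g y" arbitrary: g rule: less_induct)
  case less
  show ?case
  proof (cases "g = g'")
    case False
    then obtain h where "push \<nu> g h" "endpoint h = (i, j)" "above h \<nu>" "above g' h"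
      "tam_profile_le (profile \<nu>) (profile h) (profile g') (Suc j)"
      "(\<Sum>y<j. nabsc h y) < (\<Sum>y<j. nabsc g y)"
      using ex_push_towards[OF \<nu> less.prems(1) g' less.prems(2,3) _ less.prems(4)] by blast
    then show ?thesis
      using less.hyps less.prems(2)
      by (intro converse_rtranclp_into_rtranclp[of _ g h]) (auto simp: mem_Wset_iff)
  qed simp
qed

lemma tam_le_iff_tam_profile_le:
  assumes "endpoint \<nu> = (i, j)" "endpoint g = (i, j)" "endpoint g' = (i, j)"
    and "above g \<nu>" "above g' g"
  shows "tam_le \<nu> g g' \<longleftrightarrow> tam_profile_le (profile \<nu>) (profile g) (profile g') (Suc j)"
proof -
  have "g \<in> Wset \<nu>" "g' \<in> Wset \<nu>"
    using assms above_trans[of g' i j g \<nu>] by (auto simp: mem_Wset_iff)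
  then show ?thesis
    unfolding tam_le_def
    using tam_profile_le_if_pushes[OF assms(1)] pushes_if_tam_profile_le[OF assms(1,3,2,4,5)] by blast
qed

theorem corollary1:
  fixes i j :: nat and R :: "walk \<times> walk \<times> walk"
  assumes "R \<in> Rset i j"
  shows "tau R \<in> Gset i j \<longleftrightarrow> R \<in> Gset i j"
proof -
  obtain \<nu> g g' where R: "R = (\<nu>, g, g')" by (cases R)
  have en: "endpoint \<nu> = (i, j)" "endpoint g = (i, j)" "endpoint g' = (i, j)"
    and ab: "above g' g" "above g \<nu>"
    using assms unfolding R Rset_def by auto
  have "above g' \<nu>" using above_trans[OF en(3,2,1) ab] .
  have top: "profile \<nu> (Suc j) = int i" "profile g' (Suc j) = int i"
    using profile_eq_ecount[OF en(1), of "Suc j"] profile_eq_ecount[OF en(3), of "Suc j"] by simp_all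
  have "tau R \<in> Gset i j \<longleftrightarrow>
      tam_profile_le (profile (rev g')) (profile (rev g)) (profile (rev \<nu>)) (Suc j)"
    using tam_le_iff_tam_profile_le[of "rev g'" i j "rev g" "rev \<nu>"] en
      above_rev[OF en(2,3) ab(1)] above_rev[OF en(1,2) ab(2)] above_rev[OF en(1,3) \<open>above g' \<nu>\<close>]
    unfolding R tau_def mir_def Gset_def by (auto simp: mem_Wset_iff)
  also have "\<dots> \<longleftrightarrow> tam_profile_le (\<lambda>k. profile \<nu> (Suc j) - profile g' (Suc j - k))
      (\<lambda>k. profile \<nu> (Suc j) - profile g (Suc j - k)) (\<lambda>k. profile \<nu> (Suc j) - profile \<nu> (Suc j - k)) (Suc j)"
    using top by (intro tam_profile_le_cong) (simp add: profile_rev en)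
  also have "\<dots> \<longleftrightarrow> tam_profile_le (profile \<nu>) (profile g) (profile g') (Suc j)"
    using top by (intro tam_profile_le_dual[symmetric] allI impI profile_le_Suc) simp_all
  also have "\<dots> \<longleftrightarrow> R \<in> Gset i j"
    using tam_le_iff_tam_profile_le[OF en ab(2,1)] en ab \<open>above g' \<nu>\<close>
    unfolding R Gset_def by (auto simp: mem_Wset_iff)
  finally show ?thesis .
qed

end
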